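(* Let $G=(V,E)$ be a digraph of directed tree-width at most $k$, and let $V_1,V_2$ satisfy $V_1\cup V_2=V$, $V_1\cap V_2=\emptyset$ and $\{(u,v),(v,u):u\in V_1,v\in V_2\}\subseteq E$. Then there is a directed tree-decomposition $(T,\mathcal{X},\mathcal{W})$, $T=(V_T,E_T)$, of $G$ of width at most $k$ such that $V_1\subseteq X_e$ for every $e\in E_T$, or $V_2\subseteq X_e$ for every $e\in E_T$.
   Context: Digraphs are finite, without loops or multiple arcs. An out-tree is a digraph whose underlying graph is a tree, with a root such that all arcs are directed away from it; $u\le v$ means there is a directed path with $\ge0$ arcs from $u$ to $v$. For $Z\subseteq V$, a set $S\subseteq V$ is $Z$-normal if there is no directed walk in $G-Z$ with first and last vertices in $S$ that uses a vertex of $G-(Z\cup S)$. A directed tree-decomposition of $G=(V,E)$ is a triple $(T,\mathcal{X},\mathcal{W})$ with $T=(V_T,E_T)$ an out-tree, $\mathcal{X}=\{X_e:e\in E_T\}$ and $\mathcal{W}=\{W_r:r\in V_T\}$ subsets of $V$, such that $\mathcal{W}$ is a partition of $V$ into nonempty sets and for every $(u,v)\in E_T$ the set $\bigcup\{W_r: r\in V_T, v\le r\}$ is $X_{(u,v)}$-normal. Its width is $\max_{r\in V_T}|W_r\cup\bigcup_{e\sim r}X_e|-1$ ($e\sim r$: $r$ is an end vertex of $e$); the directed tree-width is the minimum width. *)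

theory Defs
  imports Main
begin

definition digraph :: "'a set \<Rightarrow> ('a \<times> 'a) set \<Rightarrow> bool" where
  "digraph V E \<longleftrightarrow> finite V \<and> E \<subseteq> V \<times> V \<and> (\<forall>v. (v, v) \<notin> E)"

text \<open>Out-tree: a digraph whose underlying (undirected) graph is a tree, i.e.
  connected and minimally connected, with no pair of opposite arcs (which would
  form a double edge in the underlying graph), and with a root from which all
  arcs are directed away (every vertex is reachable from the root by a directed path).\<close>
definition ugraph_connected :: "'b set \<Rightarrow> ('b \<times> 'b) set \<Rightarrow> bool" where
  "ugraph_connected VT ET \<longleftrightarrow> (\<forall>u\<in>VT. \<forall>v\<in>VT. (u, v) \<in> (ET \<union> ET\<inverse>)\<^sup>*)"

definition out_tree :: "'b set \<Rightarrow> ('b \<times> 'b) set \<Rightarrow> bool" where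
  "out_tree VT ET \<longleftrightarrow> digraph VT ET \<and> VT \<noteq> {}
     \<and> (\<forall>u v. (u, v) \<in> ET \<longrightarrow> (v, u) \<notin> ET)
     \<and> ugraph_connected VT ET
     \<and> (\<forall>e\<in>ET. \<not> ugraph_connected VT (ET - {e}))
     \<and> (\<exists>r\<in>VT. \<forall>v\<in>VT. (r, v) \<in> ET\<^sup>*)"

definition is_walk :: "('a \<times> 'a) set \<Rightarrow> 'a list \<Rightarrow> bool" where
  "is_walk E ws \<longleftrightarrow> ws \<noteq> [] \<and> (\<forall>i. Suc i < length ws \<longrightarrow> (ws ! i, ws ! Suc i) \<in> E)"

definition z_normal :: "'a set \<Rightarrow> ('a \<times> 'a) set \<Rightarrow> 'a set \<Rightarrow> 'a set \<Rightarrow> bool" where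
  "z_normal V E Z S \<longleftrightarrow>
     \<not> (\<exists>ws. is_walk E ws \<and> set ws \<subseteq> V - Z \<and> hd ws \<in> S \<and> last ws \<in> S
            \<and> (\<exists>w\<in>set ws. w \<notin> S))"

definition dir_tree_decomp ::
  "'a set \<Rightarrow> ('a \<times> 'a) set \<Rightarrow> nat set \<Rightarrow> (nat \<times> nat) set
     \<Rightarrow> (nat \<times> nat \<Rightarrow> 'a set) \<Rightarrow> (nat \<Rightarrow> 'a set) \<Rightarrow> bool" where
  "dir_tree_decomp V E VT ET X W \<longleftrightarrow>
     out_tree VT ET
     \<and> (\<forall>e\<in>ET. X e \<subseteq> V)
     \<and> (\<forall>r\<in>VT. W r \<noteq> {} \<and> W r \<subseteq> V)
     \<and> (\<forall>r\<in>VT. \<forall>s\<in>VT. r \<noteq> s \<longrightarrow> W r \<inter> W s = {})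
     \<and> (\<Union>r\<in>VT. W r) = V
     \<and> (\<forall>(u, v)\<in>ET. z_normal V E (X (u, v)) (\<Union>{W r | r. r \<in> VT \<and> (v, r) \<in> ET\<^sup>*}))"

definition dtd_width ::
  "nat set \<Rightarrow> (nat \<times> nat) set \<Rightarrow> (nat \<times> nat \<Rightarrow> 'a set) \<Rightarrow> (nat \<Rightarrow> 'a set) \<Rightarrow> nat" where
  "dtd_width VT ET X W =
     Max {card (W r \<union> \<Union>{X e | e. e \<in> ET \<and> (fst e = r \<or> snd e = r)}) | r. r \<in> VT} - 1"

definition directed_tree_width :: "'a set \<Rightarrow> ('a \<times> 'a) set \<Rightarrow> nat" where
  "directed_tree_width V E =
     (LEAST w. \<exists>VT ET X W. dir_tree_decomp V E VT ET X W \<and> dtd_width VT ET X W = w)"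

end

(*
  Start from a decomposition of minimum width and induct on the number of tree nodes.
  Call an arc e mixed if X e contains neither V1 nor V2. Since all arcs between V1 and V2
  are present in both directions, any two vertices outside X e then lie on a common closed
  walk avoiding X e, so normality of the part S below e forces S \<subseteq> X e or V - S \<subseteq> X e.
  Accordingly, either the subtree below e is merged into the tail of e, or everything
  outside it into the head of e; the absorbed vertices lie in X e, so no bag grows, and
  the tree gets smaller. If no arc is mixed, then either some bag is all of V, and the
  single-node decomposition is no wider, or no node meets both an arc whose label contains
  V1 and one whose label contains V2, and connectivity of the tree makes all labels
  contain the same side.
*)

theory Submission
  imports Defs
begin

lemma rtrancl_Diff_singleton_cases:
  assumes "(x, y) \<in> R\<^sup>*"
  shows "(x, y) \<in> (R - {(a, b)})\<^sup>* \<or> (b, y) \<in> (R - {(a, b)})\<^sup>*"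
  using assms
proof (induction rule: rtrancl_induct)
  case (step y z)
  then show ?case
    by (cases "(y, z) = (a, b)") (auto intro: rtrancl_into_rtrancl)
qed simp

lemma rtrancl_restrict_Image_closed:
  assumes closed: "R `` A \<subseteq> A" and "x \<in> A" and "(x, y) \<in> R\<^sup>*"
  shows "(x, y) \<in> (Restr R A)\<^sup>*"
  using assms(3)
proof (induction rule: rtrancl_induct)
  case (step y z)
  have "y \<in> A"
    using Image_closed_trancl[OF closed] \<open>x \<in> A\<close> step.hyps(1) by blast
  with closed step show ?case by (blast intro: rtrancl_into_rtrancl)
qed simp

lemma rtrancl_restrict_converse_Image_closed:
  assumes "R\<inverse> `` A \<subseteq> A" and "y \<in> A" and "(x, y) \<in> R\<^sup>*"
  shows "(x, y) \<in> (Restr R A)\<^sup>*"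
proof -
  have "(y, x) \<in> (Restr (R\<inverse>) A)\<^sup>*"
    using rtrancl_restrict_Image_closed[OF assms(1,2)] assms(3) by (simp add: rtrancl_converse)
  moreover have "Restr (R\<inverse>) A = (Restr R A)\<inverse>" by auto
  ultimately show ?thesis by (simp add: rtrancl_converse)
qed

lemma ugraph_connected_if_rooted:
  assumes "\<forall>x\<in>A. (r, x) \<in> R\<^sup>*"
  shows "ugraph_connected A R"
  unfolding ugraph_connected_def
proof (intro ballI)
  fix a b assume "a \<in> A" "b \<in> A"
  then have "(a, r) \<in> (R \<union> R\<inverse>)\<^sup>*" and "(r, b) \<in> (R \<union> R\<inverse>)\<^sup>*"
    using assms by (metis in_rtrancl_UnI rtrancl_converseI)+
  then show "(a, b) \<in> (R \<union> R\<inverse>)\<^sup>*" by (rule rtrancl_trans)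
qed

lemma out_tree_arcs_subset: "out_tree VT ET \<Longrightarrow> ET \<subseteq> VT \<times> VT"
  by (simp add: out_tree_def digraph_def)

lemma out_tree_root: "out_tree VT ET \<Longrightarrow> \<exists>\<rho>\<in>VT. \<forall>v\<in>VT. (\<rho>, v) \<in> ET\<^sup>*"
  by (simp add: out_tree_def)

lemma out_tree_arc_is_bridge:
  assumes ot: "out_tree VT ET" and e: "(a, b) \<in> ET" and R: "R \<subseteq> ET - {(a, b)}"
  shows "(a, b) \<notin> (R \<union> R\<inverse>)\<^sup>*"
proof
  let ?R = "ET - {(a, b)}"
  assume "(a, b) \<in> (R \<union> R\<inverse>)\<^sup>*"
  then have ab: "(a, b) \<in> (?R \<union> ?R\<inverse>)\<^sup>*"
    using R rtrancl_mono[of "R \<union> R\<inverse>" "?R \<union> ?R\<inverse>"] by blast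
  then have "(b, a) \<in> (?R \<union> ?R\<inverse>)\<^sup>*"
    by (metis converse_Un converse_converse rtrancl_converseI sup_commute)
  with ab have "ET \<union> ET\<inverse> \<subseteq> (?R \<union> ?R\<inverse>)\<^sup>*" by auto
  then have "(ET \<union> ET\<inverse>)\<^sup>* \<subseteq> (?R \<union> ?R\<inverse>)\<^sup>*" by (rule rtrancl_subset_rtrancl)
  then have "ugraph_connected VT ?R"
    using ot unfolding out_tree_def ugraph_connected_def by blast
  moreover have "\<forall>e\<in>ET. \<not> ugraph_connected VT (ET - {e})"
    using ot by (simp add: out_tree_def)
  ultimately show False using e by blast
qed

lemma out_tree_acyclic:
  assumes ot: "out_tree VT ET" and e: "(a, b) \<in> ET"
  shows "(b, a) \<notin> ET\<^sup>*"
proof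
  let ?R = "ET - {(a, b)}"
  assume "(b, a) \<in> ET\<^sup>*"
  then have "(b, a) \<in> ?R\<^sup>*" using rtrancl_Diff_singleton_cases[of b a ET a b] by auto
  then have "(a, b) \<in> (?R \<union> ?R\<inverse>)\<^sup>*"
    by (metis in_rtrancl_UnI rtrancl_converseI)
  with out_tree_arc_is_bridge[OF ot e] show False by blast
qed

lemma out_tree_rtrancl_antisym:
  assumes ot: "out_tree VT ET" and "(a, b) \<in> ET\<^sup>*" and "(b, a) \<in> ET\<^sup>*"
  shows "a = b"
proof (rule ccontr)
  assume "a \<noteq> b"
  with assms(2) obtain c where "(a, c) \<in> ET\<^sup>*" "(c, b) \<in> ET"
    by (meson rtrancl_eq_or_trancl tranclD2)
  with assms(3) out_tree_acyclic[OF ot] show False by (meson rtrancl_trans)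
qed

lemma out_tree_parent_unique:
  assumes ot: "out_tree VT ET" and yz: "(y, z) \<in> ET" and y'z: "(y', z) \<in> ET"
  shows "y = y'"
proof (rule ccontr)
  assume ne: "y \<noteq> y'"
  let ?R = "ET - {(y, z)}"
  let ?U = "(?R \<union> ?R\<inverse>)\<^sup>*"
  have fwd: "(p, q) \<in> ?U" and bwd: "(q, p) \<in> ?U" if "(p, q) \<in> ?R\<^sup>*" for p q
    using that by (metis in_rtrancl_UnI rtrancl_converseI)+
  obtain \<rho> where \<rho>: "\<And>v. v \<in> VT \<Longrightarrow> (\<rho>, v) \<in> ET\<^sup>*" using out_tree_root[OF ot] by blast
  have VT: "y \<in> VT" "y' \<in> VT" using yz y'z out_tree_arcs_subset[OF ot] by auto
  have "(z, y') \<notin> ?R\<^sup>*"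
    using out_tree_acyclic[OF ot y'z] rtrancl_mono[of ?R ET] by blast
  then have "(\<rho>, y') \<in> ?R\<^sup>*" using rtrancl_Diff_singleton_cases[OF \<rho>[OF VT(2)]] by blast
  moreover have "(y', z) \<in> ?U" using y'z ne by auto
  ultimately have \<rho>z: "(\<rho>, z) \<in> ?U" using fwd by (meson rtrancl_trans)
  from rtrancl_Diff_singleton_cases[OF \<rho>[OF VT(1)]] have "(y, z) \<in> ?U"
  proof
    assume "(\<rho>, y) \<in> ?R\<^sup>*"
    with \<rho>z show ?thesis using bwd by (meson rtrancl_trans)
  qed (rule bwd)
  with out_tree_arc_is_bridge[OF ot yz, of ?R] show False by blast
qed

definition below :: "'b set \<Rightarrow> ('b \<times> 'b) set \<Rightarrow> 'b \<Rightarrow> 'b set" where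
  "below VT ET v = {r \<in> VT. (v, r) \<in> ET\<^sup>*}"

lemma below_subset: "below VT ET v \<subseteq> VT"
  by (simp add: below_def)

lemma Union_below_eq: "\<Union>{W r | r. r \<in> VT \<and> (v, r) \<in> ET\<^sup>*} = \<Union>(W ` below VT ET v)"
  by (auto simp: below_def)

lemma below_Image_closed: "ET \<subseteq> VT \<times> VT \<Longrightarrow> ET `` below VT ET v \<subseteq> below VT ET v"
  by (auto simp: below_def intro: rtrancl_into_rtrancl)

lemma outside_below_converse_Image_closed:
  "ET \<subseteq> VT \<times> VT \<Longrightarrow> ET\<inverse> `` (VT - below VT ET v) \<subseteq> VT - below VT ET v"
  by (auto simp: below_def intro: rtrancl_into_rtrancl)

lemma below_restrict_below:
  assumes "ET \<subseteq> VT \<times> VT" and "b \<in> below VT ET v"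
  shows "below (below VT ET v) (Restr ET (below VT ET v)) b = below VT ET b"
proof -
  let ?D = "below VT ET v"
  have "(b, r) \<in> (Restr ET ?D)\<^sup>*" if "(b, r) \<in> ET\<^sup>*" for r
    using rtrancl_restrict_Image_closed[OF below_Image_closed[OF assms(1)] assms(2) that] .
  moreover have "r \<in> ?D" if "(b, r) \<in> ET\<^sup>*" "r \<in> VT" for r
    using assms(2) that by (auto simp: below_def)
  ultimately show ?thesis
    using rtrancl_mono[of "Restr ET ?D" ET] by (auto simp: below_def)
qed

lemma below_restrict_outside_below:
  assumes "ET \<subseteq> VT \<times> VT" and "b \<in> VT - below VT ET v"
  shows "below (VT - below VT ET v) (Restr ET (VT - below VT ET v)) b
           = below VT ET b - below VT ET v"
proof -
  let ?U = "VT - below VT ET v"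
  have "(b, r) \<in> (Restr ET ?U)\<^sup>*" if "(b, r) \<in> ET\<^sup>*" "r \<in> ?U" for r
    using rtrancl_restrict_converse_Image_closed[OF outside_below_converse_Image_closed[OF assms(1)]]
      that by blast
  then show ?thesis
    using rtrancl_mono[of "Restr ET ?U" ET] by (auto simp: below_def)
qed

lemma out_tree_restrict:
  assumes ot: "out_tree VT ET" and U: "U \<subseteq> VT" "\<rho> \<in> U"
    and root: "\<forall>x\<in>U. (\<rho>, x) \<in> (Restr ET U)\<^sup>*"
  shows "out_tree U (Restr ET U)"
  unfolding out_tree_def
proof (intro conjI)
  show "digraph U (Restr ET U)"
    using ot U(1) finite_subset unfolding out_tree_def digraph_def by blast
  show "\<forall>g\<in>Restr ET U. \<not> ugraph_connected U (Restr ET U - {g})"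
  proof (intro ballI notI)
    fix g assume g: "g \<in> Restr ET U" and conn: "ugraph_connected U (Restr ET U - {g})"
    obtain a b where gab: "g = (a, b)" by (cases g)
    with g conn have "(a, b) \<in> ((Restr ET U - {g}) \<union> (Restr ET U - {g})\<inverse>)\<^sup>*"
      unfolding ugraph_connected_def by blast
    with out_tree_arc_is_bridge[OF ot, of a b "Restr ET U - {g}"] g gab show False by blast
  qed
qed (use assms ugraph_connected_if_rooted[OF root] in \<open>auto simp: out_tree_def\<close>)

lemma out_tree_below:
  assumes ot: "out_tree VT ET" and v: "v \<in> VT"
  shows "out_tree (below VT ET v) (Restr ET (below VT ET v))"
proof (rule out_tree_restrict[OF ot])
  have "v \<in> below VT ET v" using v by (simp add: below_def)
  then show "\<forall>x\<in>below VT ET v. (v, x) \<in> (Restr ET (below VT ET v))\<^sup>*"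
    using below_restrict_below[OF out_tree_arcs_subset[OF ot]] by (auto simp: below_def)
qed (use v in \<open>auto simp: below_def\<close>)

lemma out_tree_outside_below:
  assumes ot: "out_tree VT ET" and e: "(u, v) \<in> ET"
  shows "out_tree (VT - below VT ET v) (Restr ET (VT - below VT ET v))"
proof -
  let ?U = "VT - below VT ET v"
  obtain \<rho> where \<rho>: "\<rho> \<in> VT" "\<forall>x\<in>VT. (\<rho>, x) \<in> ET\<^sup>*" using out_tree_root[OF ot] by blast
  have "u \<in> VT" using e out_tree_arcs_subset[OF ot] by auto
  then have "(v, \<rho>) \<notin> ET\<^sup>*" using \<rho> out_tree_acyclic[OF ot e] by (meson rtrancl_trans)
  then have "\<rho> \<in> ?U" using \<rho> by (simp add: below_def)
  moreover have "\<forall>x\<in>?U. (\<rho>, x) \<in> (Restr ET ?U)\<^sup>*"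
    using below_restrict_outside_below[OF out_tree_arcs_subset[OF ot] \<open>\<rho> \<in> ?U\<close>] \<rho>
    by (auto simp: below_def)
  ultimately show ?thesis by (intro out_tree_restrict[OF ot]) auto
qed

lemma out_tree_enter_below:
  assumes ot: "out_tree VT ET" and e: "(u, v) \<in> ET"
    and br: "(b, r) \<in> ET\<^sup>*" and b: "(v, b) \<notin> ET\<^sup>*" and r: "(v, r) \<in> ET\<^sup>*"
  shows "(b, u) \<in> ET\<^sup>*"
  using br r
proof (induction rule: rtrancl_induct)
  case (step y z)
  show ?case
  proof (cases "(v, y) \<in> ET\<^sup>*")
    case False
    have "v = z"
    proof (rule ccontr)
      assume "v \<noteq> z"
      with step.prems obtain p where "(v, p) \<in> ET\<^sup>*" "(p, z) \<in> ET"
        by (meson rtrancl_eq_or_trancl tranclD2)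
      with False step.hyps(2) out_tree_parent_unique[OF ot] show False by blast
    qed
    with step.hyps out_tree_parent_unique[OF ot _ e] show ?thesis by blast
  qed (use step.IH in blast)
qed (use b in simp)

lemma dir_tree_decompD:
  assumes "dir_tree_decomp V E VT ET X W"
  shows "out_tree VT ET" and "\<And>e. e \<in> ET \<Longrightarrow> X e \<subseteq> V"
    and "\<And>r. r \<in> VT \<Longrightarrow> W r \<noteq> {}" and "\<And>r. r \<in> VT \<Longrightarrow> W r \<subseteq> V"
    and "\<And>x r s. x \<in> W r \<Longrightarrow> x \<in> W s \<Longrightarrow> r \<in> VT \<Longrightarrow> s \<in> VT \<Longrightarrow> r = s"
    and "\<Union>(W ` VT) = V"
    and "\<And>u v. (u, v) \<in> ET \<Longrightarrow> z_normal V E (X (u, v)) (\<Union>(W ` below VT ET v))"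
  using assms by (auto simp: dir_tree_decomp_def Union_below_eq) blast

definition bag :: "(nat \<times> nat) set \<Rightarrow> (nat \<times> nat \<Rightarrow> 'a set) \<Rightarrow> (nat \<Rightarrow> 'a set) \<Rightarrow> nat \<Rightarrow> 'a set" where
  "bag ET X W r = W r \<union> \<Union>{X e | e. e \<in> ET \<and> (fst e = r \<or> snd e = r)}"

lemma dtd_width_bag: "dtd_width VT ET X W = Max ((\<lambda>r. card (bag ET X W r)) ` VT) - 1"
  by (simp only: dtd_width_def bag_def Setcompr_eq_image)

lemma arc_label_subset_bag: "e \<in> ET \<Longrightarrow> r \<in> {fst e, snd e} \<Longrightarrow> X e \<subseteq> bag ET X W r"
  unfolding bag_def by blast

lemma bag_mono:
  assumes "ET' \<subseteq> ET" and "W' r \<subseteq> bag ET X W r"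
  shows "bag ET' X W' r \<subseteq> bag ET X W r"
  using assms unfolding bag_def by blast

lemma bag_subset_vertices:
  assumes "dir_tree_decomp V E VT ET X W" and "r \<in> VT"
  shows "bag ET X W r \<subseteq> V"
  using assms dir_tree_decompD[OF assms(1)] by (auto simp: bag_def)

lemma dtd_finite_nodes: "dir_tree_decomp V E VT ET X W \<Longrightarrow> finite VT"
  by (auto simp: dir_tree_decomp_def out_tree_def digraph_def)

lemma dtd_nodes_nonempty: "dir_tree_decomp V E VT ET X W \<Longrightarrow> VT \<noteq> {}"
  by (auto simp: dir_tree_decomp_def out_tree_def)

lemma dtd_width_mono:
  assumes d: "dir_tree_decomp V E VT ET X W" and d': "dir_tree_decomp V E VT' ET' X' W'"
    and "finite V"
    and bags: "\<And>r. r \<in> VT' \<Longrightarrow> \<exists>s\<in>VT. bag ET' X' W' r \<subseteq> bag ET X W s"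
  shows "dtd_width VT' ET' X' W' \<le> dtd_width VT ET X W"
proof -
  have "card (bag ET' X' W' r) \<le> Max ((\<lambda>r. card (bag ET X W r)) ` VT)" if "r \<in> VT'" for r
  proof -
    obtain s where "s \<in> VT" "bag ET' X' W' r \<subseteq> bag ET X W s" using bags \<open>r \<in> VT'\<close> by blast
    moreover have "finite (bag ET X W s)"
      using bag_subset_vertices[OF d \<open>s \<in> VT\<close>] \<open>finite V\<close> finite_subset by blast
    ultimately show ?thesis
      using dtd_finite_nodes[OF d] by (auto intro: card_mono Max_ge order_trans)
  qed
  then show ?thesis
    unfolding dtd_width_bag
    using dtd_finite_nodes[OF d'] dtd_nodes_nonempty[OF d'] by (simp add: diff_le_mono)
qed

lemma dtd_width_ge:
  assumes d: "dir_tree_decomp V E VT ET X W" and "r \<in> VT" and "V \<subseteq> bag ET X W r"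
    and "finite V"
  shows "card V - 1 \<le> dtd_width VT ET X W"
proof -
  have "card V \<le> card (bag ET X W r)"
    using assms bag_subset_vertices[OF d] by (metis card_mono finite_subset)
  also have "\<dots> \<le> Max ((\<lambda>r. card (bag ET X W r)) ` VT)"
    using dtd_finite_nodes[OF d] \<open>r \<in> VT\<close> by auto
  finally show ?thesis unfolding dtd_width_bag by (rule diff_le_mono)
qed

lemma single_node_dtd:
  assumes "digraph V E" and "V \<noteq> {}"
  shows "dir_tree_decomp V E {0} {} X (\<lambda>_. V)" and "dtd_width {0} {} X (\<lambda>_. V) = card V - 1"
proof -
  have "out_tree {0::nat} {}"
    unfolding out_tree_def digraph_def ugraph_connected_def by auto
  then show "dir_tree_decomp V E {0} {} X (\<lambda>_. V)"
    unfolding dir_tree_decomp_def using assms by auto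
  show "dtd_width {0} {} X (\<lambda>_. V) = card V - 1"
    unfolding dtd_width_def by simp
qed

definition absorb :: "(nat \<Rightarrow> 'a set) \<Rightarrow> nat set \<Rightarrow> nat \<Rightarrow> nat \<Rightarrow> 'a set" where
  "absorb W A t = W(t := W t \<union> \<Union>(W ` A))"

lemma mem_absorb_iff: "x \<in> absorb W A t r \<longleftrightarrow> x \<in> W r \<or> r = t \<and> x \<in> \<Union>(W ` A)"
  by (simp add: absorb_def)

lemma Union_absorb_image:
  "\<Union>(absorb W A t ` B) = \<Union>(W ` B) \<union> (if t \<in> B then \<Union>(W ` A) else {})"
  by (auto simp: mem_absorb_iff) blast

lemma absorb_subset_bag:
  assumes "\<Union>(W ` A) \<subseteq> bag ET X W t"
  shows "absorb W A t r \<subseteq> bag ET X W r"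
  using assms unfolding absorb_def bag_def by auto

lemma dir_tree_decomp_absorb:
  assumes d: "dir_tree_decomp V E VT ET X W"
    and U: "U \<subseteq> VT" "t \<in> U" and ot: "out_tree U (Restr ET U)"
    and parts: "\<And>a b. (a, b) \<in> Restr ET U \<Longrightarrow>
      \<Union>(absorb W (VT - U) t ` below U (Restr ET U) b) = \<Union>(W ` below VT ET b)"
  shows "dir_tree_decomp V E U (Restr ET U) X (absorb W (VT - U) t)"
  unfolding dir_tree_decomp_def Union_below_eq
proof (intro conjI)
  note D = dir_tree_decompD[OF d]
  show "\<forall>r\<in>U. absorb W (VT - U) t r \<noteq> {} \<and> absorb W (VT - U) t r \<subseteq> V"
    using U D(3,4) by (auto simp: absorb_def)
  show "\<forall>r\<in>U. \<forall>s\<in>U. r \<noteq> s \<longrightarrow> absorb W (VT - U) t r \<inter> absorb W (VT - U) t s = {}"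
    unfolding disjoint_iff mem_absorb_iff using U D(5) by blast
  show "(\<Union>r\<in>U. absorb W (VT - U) t r) = V"
    using U D(6) Union_absorb_image[of W "VT - U" t U] by auto
  show "\<forall>(a, b)\<in>Restr ET U. z_normal V E (X (a, b)) (\<Union>(absorb W (VT - U) t ` below U (Restr ET U) b))"
    using parts D(7) by auto
qed (use ot dir_tree_decompD(2)[OF d] in auto)

definition dtd_reducible ::
  "'a set \<Rightarrow> ('a \<times> 'a) set \<Rightarrow> nat set \<Rightarrow> (nat \<times> nat) set
     \<Rightarrow> (nat \<times> nat \<Rightarrow> 'a set) \<Rightarrow> (nat \<Rightarrow> 'a set) \<Rightarrow> bool" where
  "dtd_reducible V E VT ET X W \<longleftrightarrow>
     (\<exists>VT' ET' W'. dir_tree_decomp V E VT' ET' X W' \<and> card VT' < card VT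
        \<and> dtd_width VT' ET' X W' \<le> dtd_width VT ET X W)"

lemma dtd_absorb_reducible:
  assumes d: "dir_tree_decomp V E VT ET X W" and "finite V"
    and U: "U \<subset> VT" "t \<in> U" and ot: "out_tree U (Restr ET U)"
    and parts: "\<And>a b. (a, b) \<in> Restr ET U \<Longrightarrow>
      \<Union>(absorb W (VT - U) t ` below U (Restr ET U) b) = \<Union>(W ` below VT ET b)"
    and absorbed: "\<Union>(W ` (VT - U)) \<subseteq> bag ET X W t"
  shows "dtd_reducible V E VT ET X W"
  unfolding dtd_reducible_def
proof (intro exI conjI)
  show d': "dir_tree_decomp V E U (Restr ET U) X (absorb W (VT - U) t)"
    using dir_tree_decomp_absorb[OF d psubset_imp_subset[OF U(1)] U(2) ot parts] .
  show "card U < card VT" using psubset_card_mono[OF dtd_finite_nodes[OF d] U(1)] .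
  have "bag (Restr ET U) X (absorb W (VT - U) t) r \<subseteq> bag ET X W r" for r
    using absorb_subset_bag[OF absorbed, of r] by (intro bag_mono) auto
  then show "dtd_width U (Restr ET U) X (absorb W (VT - U) t) \<le> dtd_width VT ET X W"
    using dtd_width_mono[OF d d' \<open>finite V\<close>] U(1) by blast
qed

lemma prune_below_preserves_parts:
  assumes ot: "out_tree VT ET" and e: "(u, v) \<in> ET" and b: "b \<in> VT - below VT ET v"
  shows "\<Union>(absorb W (below VT ET v) u ` below (VT - below VT ET v) (Restr ET (VT - below VT ET v)) b)
           = \<Union>(W ` below VT ET b)"
proof -
  let ?D = "below VT ET v"
  have u: "u \<in> VT - ?D"
    using e out_tree_arcs_subset[OF ot] out_tree_acyclic[OF ot e] by (auto simp: below_def)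
  note below_b = below_restrict_outside_below[OF out_tree_arcs_subset[OF ot] b]
  show ?thesis
  proof (cases "(b, u) \<in> ET\<^sup>*")
    case True
    then have bv: "(b, v) \<in> ET\<^sup>*" using e by (rule rtrancl_into_rtrancl)
    have "?D \<subseteq> below VT ET b" unfolding below_def using rtrancl_trans[OF bv] by blast
    moreover have "u \<in> below VT ET b - ?D" using True u by (simp add: below_def)
    ultimately show ?thesis unfolding below_b Union_absorb_image by auto
  next
    case False
    \<comment> \<open>A path from b into the subtree below v would have to pass through u.\<close>
    have "(v, b) \<notin> ET\<^sup>*" using b by (simp add: below_def)
    with False have "below VT ET b \<inter> ?D = {}"
      using out_tree_enter_below[OF ot e _ \<open>(v, b) \<notin> ET\<^sup>*\<close>] unfolding below_def by blast
    moreover have "u \<notin> below VT ET b - ?D" using False by (simp add: below_def)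
    ultimately show ?thesis unfolding below_b Union_absorb_image by auto
  qed
qed

lemma prune_above_preserves_parts:
  assumes ot: "out_tree VT ET" and "b \<in> below VT ET v" and "b \<noteq> v"
  shows "\<Union>(absorb W (VT - below VT ET v) v ` below (below VT ET v) (Restr ET (below VT ET v)) b)
           = \<Union>(W ` below VT ET b)"
proof -
  have "v \<notin> below VT ET b"
    using assms out_tree_rtrancl_antisym[OF ot, of b v] unfolding below_def by blast
  then show ?thesis
    unfolding below_restrict_below[OF out_tree_arcs_subset[OF ot] \<open>b \<in> below VT ET v\<close>]
      Union_absorb_image by simp
qed

lemma dtd_Union_parts_Diff:
  assumes d: "dir_tree_decomp V E VT ET X W" and "A \<subseteq> VT"
  shows "\<Union>(W ` (VT - A)) = V - \<Union>(W ` A)"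
proof -
  have "x \<notin> W s" if "r \<in> VT - A" "x \<in> W r" "s \<in> A" for x r s
    using dir_tree_decompD(5)[OF d, of x r s] that \<open>A \<subseteq> VT\<close> by blast
  moreover have "\<Union>(W ` VT) = V" by (rule dir_tree_decompD(6)[OF d])
  ultimately show ?thesis using \<open>A \<subseteq> VT\<close> by auto
qed

lemma dtd_prune_below:
  assumes d: "dir_tree_decomp V E VT ET X W" and "finite V" and e: "(u, v) \<in> ET"
    and covered: "\<Union>(W ` below VT ET v) \<subseteq> X (u, v)"
  shows "dtd_reducible V E VT ET X W"
proof -
  let ?D = "below VT ET v"
  let ?U = "VT - ?D"
  have ot: "out_tree VT ET" using dir_tree_decompD(1)[OF d] .
  have v: "v \<in> ?D" and u: "u \<in> ?U"
    using e out_tree_arcs_subset[OF ot] out_tree_acyclic[OF ot e] by (auto simp: below_def)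
  have removed: "VT - ?U = ?D" using below_subset[of VT ET v] by blast
  have "X (u, v) \<subseteq> bag ET X W u" by (rule arc_label_subset_bag[OF e]) simp
  with covered have absorbed: "\<Union>(W ` (VT - ?U)) \<subseteq> bag ET X W u"
    unfolding removed by blast
  have "?U \<subset> VT" using v below_subset[of VT ET v] by blast
  moreover have "\<Union>(absorb W (VT - ?U) u ` below ?U (Restr ET ?U) b) = \<Union>(W ` below VT ET b)"
    if "(a, b) \<in> Restr ET ?U" for a b
    unfolding removed using that by (intro prune_below_preserves_parts[OF ot e]) blast
  ultimately show ?thesis
    using dtd_absorb_reducible[OF d \<open>finite V\<close> _ u out_tree_outside_below[OF ot e] _ absorbed]
    by blast
qed

lemma dtd_prune_above:
  assumes d: "dir_tree_decomp V E VT ET X W" and "finite V" and e: "(u, v) \<in> ET"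
    and covered: "V - \<Union>(W ` below VT ET v) \<subseteq> X (u, v)"
  shows "dtd_reducible V E VT ET X W"
proof -
  let ?D = "below VT ET v"
  have ot: "out_tree VT ET" using dir_tree_decompD(1)[OF d] .
  have "v \<in> VT" and v: "v \<in> ?D" and u: "u \<in> VT - ?D"
    using e out_tree_arcs_subset[OF ot] out_tree_acyclic[OF ot e] by (auto simp: below_def)
  have parts: "\<Union>(absorb W (VT - ?D) v ` below ?D (Restr ET ?D) b) = \<Union>(W ` below VT ET b)"
    if ab: "(a, b) \<in> Restr ET ?D" for a b
  proof (rule prune_above_preserves_parts[OF ot])
    show "b \<in> ?D" using ab by blast
    show "b \<noteq> v"
    proof
      assume "b = v"
      with ab have "a = u" using out_tree_parent_unique[OF ot _ e] by blast
      with ab u show False by blast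
    qed
  qed
  have "X (u, v) \<subseteq> bag ET X W v" by (rule arc_label_subset_bag[OF e]) simp
  with covered have absorbed: "\<Union>(W ` (VT - ?D)) \<subseteq> bag ET X W v"
    using dtd_Union_parts_Diff[OF d below_subset] by blast
  have "?D \<subset> VT" using u below_subset[of VT ET v] by blast
  from dtd_absorb_reducible[OF d \<open>finite V\<close> this v out_tree_below[OF ot \<open>v \<in> VT\<close>] parts absorbed]
  show ?thesis .
qed

lemma is_walk_Cons_Cons: "is_walk E (x # y # ws) \<longleftrightarrow> (x, y) \<in> E \<and> is_walk E (y # ws)"
  unfolding is_walk_def by (simp add: All_less_Suc2)

lemma is_walk_singleton: "is_walk E [x]"
  by (simp add: is_walk_def)

lemma bicomplete_closed_walk:
  assumes cover: "V1 \<union> V2 = V"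
    and arcs: "{(u, v) | u v. u \<in> V1 \<and> v \<in> V2} \<union> {(v, u) | u v. u \<in> V1 \<and> v \<in> V2} \<subseteq> E"
    and a: "a \<in> V1 - Z" and b: "b \<in> V2 - Z" and x: "x \<in> V - Z" and y: "y \<in> V - Z"
  shows "\<exists>ws. is_walk E ws \<and> set ws \<subseteq> V - Z \<and> hd ws = x \<and> last ws = x \<and> y \<in> set ws"
proof -
  let ?adj = "\<lambda>p q. (p, q) \<in> E \<and> (q, p) \<in> E"
  have adj: "?adj p q" "?adj q p" if "p \<in> V1" "q \<in> V2" for p q
    using arcs that by blast+
  show ?thesis
  proof (cases "?adj x y")
    case True
    then show ?thesis using x y by (intro exI[of _ "[x, y, x]"]) (simp add: is_walk_Cons_Cons is_walk_singleton)
  next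
    case False
    define w where "w = (if x \<in> V1 then b else a)"
    have "w \<in> V - Z" using a b cover by (auto simp: w_def)
    moreover have "?adj x w \<and> ?adj w y"
      using False adj a b x y cover unfolding w_def by (cases "x \<in> V1"; cases "y \<in> V1") auto
    ultimately show ?thesis
      using x y by (intro exI[of _ "[x, w, y, w, x]"]) (simp add: is_walk_Cons_Cons is_walk_singleton)
  qed
qed

lemma z_normal_bicomplete:
  assumes cover: "V1 \<union> V2 = V"
    and arcs: "{(u, v) | u v. u \<in> V1 \<and> v \<in> V2} \<union> {(v, u) | u v. u \<in> V1 \<and> v \<in> V2} \<subseteq> E"
    and "a \<in> V1 - Z" and "b \<in> V2 - Z" and "S \<subseteq> V" and normal: "z_normal V E Z S"
  shows "S \<subseteq> Z \<or> V - S \<subseteq> Z"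
proof (rule ccontr)
  assume "\<not> ?thesis"
  then obtain x y where x: "x \<in> S - Z" and y: "y \<in> V - S - Z" by blast
  then obtain ws where ws: "is_walk E ws" "set ws \<subseteq> V - Z" "hd ws = x" "last ws = x" "y \<in> set ws"
    using bicomplete_closed_walk[OF cover arcs assms(3,4), of x y] \<open>S \<subseteq> V\<close> by blast
  then have "hd ws \<in> S \<and> last ws \<in> S \<and> (\<exists>w\<in>set ws. w \<notin> S)" using x y by auto
  with ws(1,2) normal show False unfolding z_normal_def by blast
qed

lemma ugraph_connected_arc_classes:
  assumes conn: "ugraph_connected VT ET" and arcs: "ET \<subseteq> VT \<times> VT"
    and cover: "\<And>e. e \<in> ET \<Longrightarrow> P e \<or> Q e"
    and apart: "\<And>g h r. g \<in> ET \<Longrightarrow> h \<in> ET \<Longrightarrow> r \<in> {fst g, snd g} \<Longrightarrow> r \<in> {fst h, snd h}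
      \<Longrightarrow> P g \<Longrightarrow> Q h \<Longrightarrow> False"
  shows "(\<forall>e\<in>ET. P e) \<or> (\<forall>e\<in>ET. Q e)"
proof (rule ccontr)
  assume "\<not> ?thesis"
  then obtain e f where e: "e \<in> ET" "Q e" "\<not> P e" and f: "f \<in> ET" "P f" "\<not> Q f"
    using cover by blast
  let ?no_P = "\<lambda>y. \<forall>g\<in>ET. y \<in> {fst g, snd g} \<longrightarrow> \<not> P g"
  have "snd e \<in> VT" "fst f \<in> VT" using e(1) f(1) arcs by auto
  then have "(snd e, fst f) \<in> (ET \<union> ET\<inverse>)\<^sup>*"
    using conn unfolding ugraph_connected_def by blast
  then have "?no_P (fst f)"
  proof (induction rule: rtrancl_induct)
    case base
    then show ?case using apart e(1,2) by fastforce
  next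
    case (step y z)
    then obtain g where g: "g \<in> ET" "y \<in> {fst g, snd g}" "z \<in> {fst g, snd g}" by force
    with step.IH cover have "Q g" by blast
    with g apart show ?case by blast
  qed
  with f show False by auto
qed

lemma dtd_reducible_at_mixed_arc:
  assumes d: "dir_tree_decomp V E VT ET X W" and "finite V" and cover: "V1 \<union> V2 = V"
    and arcs: "{(u, v) | u v. u \<in> V1 \<and> v \<in> V2} \<union> {(v, u) | u v. u \<in> V1 \<and> v \<in> V2} \<subseteq> E"
    and e: "(u, v) \<in> ET" and "\<not> V1 \<subseteq> X (u, v)" and "\<not> V2 \<subseteq> X (u, v)"
  shows "dtd_reducible V E VT ET X W"
proof -
  obtain a b where a: "a \<in> V1 - X (u, v)" and b: "b \<in> V2 - X (u, v)" using assms(6,7) by blast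
  have "\<Union>(W ` below VT ET v) \<subseteq> V"
    using dir_tree_decompD(4)[OF d] below_subset[of VT ET v] by blast
  from z_normal_bicomplete[OF cover arcs a b this dir_tree_decompD(7)[OF d e]]
  show ?thesis using dtd_prune_below[OF d \<open>finite V\<close> e] dtd_prune_above[OF d \<open>finite V\<close> e] by blast
qed

lemma dtd_uniform_if_no_mixed_arc:
  assumes d: "dir_tree_decomp V E VT ET X W" and cover: "V1 \<union> V2 = V"
    and unmixed: "\<And>e. e \<in> ET \<Longrightarrow> V1 \<subseteq> X e \<or> V2 \<subseteq> X e"
    and no_full_bag: "\<And>r. r \<in> VT \<Longrightarrow> \<not> V \<subseteq> bag ET X W r"
  shows "(\<forall>e\<in>ET. V1 \<subseteq> X e) \<or> (\<forall>e\<in>ET. V2 \<subseteq> X e)"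
proof -
  have ot: "out_tree VT ET" using dir_tree_decompD(1)[OF d] .
  then have conn: "ugraph_connected VT ET" by (simp add: out_tree_def)
  show ?thesis
  proof (rule ugraph_connected_arc_classes[OF conn out_tree_arcs_subset[OF ot] unmixed])
    fix g h r assume "g \<in> ET" "h \<in> ET" "r \<in> {fst g, snd g}" "r \<in> {fst h, snd h}"
      and "V1 \<subseteq> X g" "V2 \<subseteq> X h"
    then have "V \<subseteq> bag ET X W r" using cover arc_label_subset_bag[of _ ET r X W] by blast
    moreover have "r \<in> VT"
      using \<open>g \<in> ET\<close> \<open>r \<in> {fst g, snd g}\<close> out_tree_arcs_subset[OF ot] by auto
    ultimately show False using no_full_bag by blast
  qed
qed

lemma dtd_uniform_arc_labels_exists:
  assumes "digraph V E" and "V \<noteq> {}" and cover: "V1 \<union> V2 = V"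
    and arcs: "{(u, v) | u v. u \<in> V1 \<and> v \<in> V2} \<union> {(v, u) | u v. u \<in> V1 \<and> v \<in> V2} \<subseteq> E"
    and "dir_tree_decomp V E VT ET X W"
  shows "\<exists>VT' ET' X' W'. dir_tree_decomp V E VT' ET' X' W'
           \<and> dtd_width VT' ET' X' W' \<le> dtd_width VT ET X W
           \<and> ((\<forall>e\<in>ET'. V1 \<subseteq> X' e) \<or> (\<forall>e\<in>ET'. V2 \<subseteq> X' e))"
  using assms(5)
proof (induction "card VT" arbitrary: VT ET W rule: less_induct)
  case less
  note d = less.prems
  have "finite V" using \<open>digraph V E\<close> by (simp add: digraph_def)
  consider (mixed) u v where "(u, v) \<in> ET" "\<not> V1 \<subseteq> X (u, v)" "\<not> V2 \<subseteq> X (u, v)"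
    | (full_bag) r where "r \<in> VT" "V \<subseteq> bag ET X W r"
    | (separated) "\<And>e. e \<in> ET \<Longrightarrow> V1 \<subseteq> X e \<or> V2 \<subseteq> X e" "\<And>r. r \<in> VT \<Longrightarrow> \<not> V \<subseteq> bag ET X W r"
  proof (cases "\<exists>(u, v)\<in>ET. \<not> V1 \<subseteq> X (u, v) \<and> \<not> V2 \<subseteq> X (u, v)")
    case True
    then show ?thesis using that(1) by blast
  next
    case False
    then show ?thesis using that(2,3) by fast
  qed
  then show ?case
  proof cases
    case mixed
    then obtain VT' ET' W' where smaller: "card VT' < card VT" and d': "dir_tree_decomp V E VT' ET' X W'"
      and width: "dtd_width VT' ET' X W' \<le> dtd_width VT ET X W"
      using dtd_reducible_at_mixed_arc[OF d \<open>finite V\<close> cover arcs] unfolding dtd_reducible_def by blast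
    from less.hyps[OF smaller d'] width show ?thesis by (meson order_trans)
  next
    case full_bag
    then have "card V - 1 \<le> dtd_width VT ET X W" using dtd_width_ge[OF d _ _ \<open>finite V\<close>] by blast
    with single_node_dtd[OF \<open>digraph V E\<close> \<open>V \<noteq> {}\<close>, of X]
    have "dir_tree_decomp V E {0} {} X (\<lambda>_. V) \<and> dtd_width {0} {} X (\<lambda>_. V) \<le> dtd_width VT ET X W"
      by simp
    then show ?thesis by blast
  next
    case separated
    from dtd_uniform_if_no_mixed_arc[OF d cover separated] d show ?thesis by blast
  qed
qed

theorem lemma4p9:
  fixes V :: "'a set" and E :: "('a \<times> 'a) set" and V1 V2 :: "'a set" and k :: nat
  assumes "digraph V E" and "V \<noteq> {}"
    and "directed_tree_width V E \<le> k"
    and "V1 \<union> V2 = V" and "V1 \<inter> V2 = {}"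
    and "{(u, v) | u v. u \<in> V1 \<and> v \<in> V2} \<union> {(v, u) | u v. u \<in> V1 \<and> v \<in> V2} \<subseteq> E"
  shows "\<exists>VT ET X W. dir_tree_decomp V E VT ET X W \<and> dtd_width VT ET X W \<le> k
           \<and> ((\<forall>e\<in>ET. V1 \<subseteq> X e) \<or> (\<forall>e\<in>ET. V2 \<subseteq> X e))"
proof -
  let ?has_width = "\<lambda>w. \<exists>VT ET X W. dir_tree_decomp V E VT ET X W \<and> dtd_width VT ET X W = w"
  have "?has_width (card V - 1)" using single_node_dtd[OF assms(1,2)] by blast
  then have "?has_width (directed_tree_width V E)"
    unfolding directed_tree_width_def by (rule LeastI)
  then obtain VT ET X W where "dir_tree_decomp V E VT ET X W"
    and width: "dtd_width VT ET X W = directed_tree_width V E" by blast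
  from dtd_uniform_arc_labels_exists[OF assms(1,2,4,6) this(1)]
  obtain VT' ET' X' W' where "dir_tree_decomp V E VT' ET' X' W'"
    and "dtd_width VT' ET' X' W' \<le> dtd_width VT ET X W"
    and "(\<forall>e\<in>ET'. V1 \<subseteq> X' e) \<or> (\<forall>e\<in>ET'. V2 \<subseteq> X' e)" by blast
  moreover have "dtd_width VT' ET' X' W' \<le> k" using calculation(2) width assms(3) by linarith
  ultimately show ?thesis by blast
qed

end
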